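(* Let $\Gamma_0>0$. There exist $h_0>0$, $C_0>0$ and $\eta_0>0$ such that for all $h\in(0,h_0)$ and every eigenpair $(\lambda,\psi)$ of $\mathcal H_{\mathsf{BO},\mathsf{Tri}}(h)$ with $|\lambda-\frac18|\le\Gamma_0h^{2/3}$, $$\int_{-\pi\sqrt2}^0e^{\eta_0h^{-1}|x|^{3/2}}\big(|\psi|^2+|h^{2/3}\partial_x\psi|^2\big)\,dx\le C_0\|\psi\|^2.$$
   Context: For $h>0$, $\mathcal H_{\mathsf{BO},\mathsf{Tri}}(h)=-h^2\partial_x^2+\frac{\pi^2}{4(x+\pi\sqrt2)^2}$ is the Dirichlet realization on $L^2((-\pi\sqrt2,0))$; $\|\cdot\|$ is the $L^2((-\pi\sqrt2,0))$ norm. *)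

theory Defs
  imports "HOL-Analysis.Analysis"
begin

definition tri_a :: real where
  "tri_a = - pi * sqrt 2"

definition tri_V :: "real \<Rightarrow> real" where
  "tri_V x = pi^2 / (4 * (x + pi * sqrt 2)^2)"

definition dx :: "(real \<Rightarrow> complex) \<Rightarrow> real \<Rightarrow> complex" where
  "dx f x = vector_derivative f (at x)"

text \<open>(lam, psi) is an eigenpair of the Dirichlet realization of
  -h^2 d^2/dx^2 + tri_V on L^2((tri_a, 0)): psi is a nonzero function in
  H^1_0 (continuous on the closed interval, vanishing at both endpoints,
  square-integrable derivative), twice differentiable inside and solving
  the eigenvalue equation there.\<close>
definition tri_eigenpair :: "real \<Rightarrow> real \<Rightarrow> (real \<Rightarrow> complex) \<Rightarrow> bool" where
  "tri_eigenpair h lam psi \<longleftrightarrow>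
     continuous_on {tri_a..0} psi \<and> psi tri_a = 0 \<and> psi 0 = 0 \<and>
     (\<forall>x\<in>{tri_a<..<0}. psi differentiable (at x) \<and> dx psi differentiable (at x) \<and>
        - (complex_of_real (h^2)) * dx (dx psi) x + complex_of_real (tri_V x) * psi x
          = complex_of_real lam * psi x) \<and>
     set_integrable lborel {tri_a<..<0} (\<lambda>x. (cmod (dx psi x))^2) \<and>
     (\<exists>x\<in>{tri_a<..<0}. psi x \<noteq> 0)"

end

theory Submission
  imports Defs
begin

text \<open>For the weight \<open>w = exp (\<eta> |x|\<^sup>3\<^sup>/\<^sup>2 / h)\<close>
  the eigenvalue equation gives
  \<open>(h\<^sup>2 w Re (\<psi>' conj \<psi>))' = w ((V - \<lambda>) |\<psi>|\<^sup>2 + h\<^sup>2 |\<psi>'|\<^sup>2) + h\<^sup>2 w' Re (\<psi>' conj \<psi>)\<close>.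
  Since \<open>|w'/w| = 3\<eta>|x|\<^sup>1\<^sup>/\<^sup>2 / (2h)\<close>, the last term is absorbed by Young's inequality at
  the price of replacing \<open>V - \<lambda>\<close> by \<open>V - \<lambda> - 9\<eta>\<^sup>2|x|/8\<close>, which is still at least
  \<open>c|x|/2 - \<Gamma> h\<^sup>2\<^sup>/\<^sup>3\<close> because \<open>V - 1/8\<close> grows linearly away from the well at \<open>x = 0\<close>.
  This dominates \<open>h\<^sup>2\<^sup>/\<^sup>3\<close> outside a region \<open>|x| \<le> R h\<^sup>2\<^sup>/\<^sup>3\<close>, on which the weight is bounded
  uniformly in \<open>h\<close>. Integrating between points where the Dirichlet conditions give the flux a
  good sign bounds the weighted energy on closed subintervals; monotone convergence finishes.\<close>

definition tri_slope :: real where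
  "tri_slope = pi^2 / (4 * (pi * sqrt 2)^3)"

lemma tri_slope_pos: "tri_slope > 0"
  unfolding tri_slope_def by simp

lemma tri_V_ge_threshold:
  assumes "tri_a < x" "x < 0"
  shows "1/8 + tri_slope * (-x) \<le> tri_V x"
proof -
  define s where "s = pi * sqrt 2"
  define y where "y = x + s"
  have s: "s > 0" unfolding s_def by simp
  have y: "0 < y" "y < s" using assms unfolding y_def s_def tri_a_def by auto
  have "1/8 = pi^2 / (4 * s^2)" unfolding s_def by (simp add: power_mult_distrib)
  then have "tri_V x - 1/8 = pi^2 * ((s - y) * (s + y)) / (4 * y^2 * s^2)"
    unfolding tri_V_def y_def[symmetric] s_def[symmetric] using y s
    by (simp add: field_simps power2_eq_square)
  also have "\<dots> \<ge> pi^2 * ((s - y) * s) / (4 * s^2 * s^2)"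
    using y s by (intro frac_le mult_left_mono mult_right_mono power_mono) auto
  also have "pi^2 * ((s - y) * s) / (4 * s^2 * s^2) = tri_slope * (-x)"
    unfolding tri_slope_def s_def[symmetric] y_def using s
    by (simp add: field_simps power2_eq_square power3_eq_cube)
  finally show ?thesis by simp
qed

lemma tri_effective_potential_ge:
  assumes x: "tri_a < x" "x < 0" and lam: "\<bar>lam - 1/8\<bar> \<le> G * hp"
    and eta: "eta^2 \<le> tri_slope / 3"
  shows "tri_slope / 2 * \<bar>x\<bar> - G * hp \<le> tri_V x - lam - 9/8 * eta^2 * \<bar>x\<bar>"
proof -
  have "9/8 * eta^2 * (-x) \<le> 9/8 * (tri_slope / 3) * (-x)"
    using eta x by (intro mult_right_mono mult_left_mono) auto
  moreover have "tri_slope * (-x) \<ge> 0"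
    using tri_slope_pos x by (simp add: mult_nonneg_nonpos)
  ultimately show ?thesis
    unfolding abs_of_neg[OF x(2)] using tri_V_ge_threshold[OF x] abs_le_D1[OF lam] by linarith
qed

lemma has_real_derivative_Re_mult_cnj:
  assumes "(f has_vector_derivative f') (at x)" "(g has_vector_derivative g') (at x)"
  shows "((\<lambda>x. Re (f x * cnj (g x))) has_real_derivative Re (f' * cnj (g x) + f x * cnj g')) (at x)"
proof -
  have "((\<lambda>x. f x * cnj (g x)) has_vector_derivative (f x * cnj g' + f' * cnj (g x))) (at x)"
    by (intro has_vector_derivative_mult has_vector_derivative_cnj assms)
  then show ?thesis
    by (auto dest: has_field_derivative_Re simp: add.commute)
qed

lemma norm_sq_mean_value:
  fixes f :: "real \<Rightarrow> complex"
  assumes "a < b" "continuous_on {a..b} f"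
    and "\<And>x. a < x \<Longrightarrow> x < b \<Longrightarrow> (f has_vector_derivative f' x) (at x)"
  obtains z where "a < z" "z < b"
    "(cmod (f b))^2 - (cmod (f a))^2 = (b - a) * (2 * Re (f' z * cnj (f z)))"
proof -
  define n where "n x = Re (f x * cnj (f x))" for x
  have "continuous_on {a..b} n"
    unfolding n_def by (intro continuous_intros assms(2))
  moreover have "(n has_real_derivative 2 * Re (f' x * cnj (f x))) (at x)" if "a < x" "x < b" for x
    using has_real_derivative_Re_mult_cnj[OF assms(3)[OF that] assms(3)[OF that]]
    unfolding n_def by (simp add: algebra_simps)
  ultimately obtain z where "a < z" "z < b" "n b - n a = (b - a) * (2 * Re (f' z * cnj (f z)))"
    using MVT[OF assms(1)] unfolding real_differentiable_def by (metis DERIV_unique)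
  moreover have "n x = (cmod (f x))^2" for x
    unfolding n_def by (simp add: complex_mult_cnj cmod_power2)
  ultimately show ?thesis using that by simp
qed

definition agmon_weight :: "real \<Rightarrow> real \<Rightarrow> real \<Rightarrow> real" where
  "agmon_weight eta h x = exp (eta / h * \<bar>x\<bar> powr (3/2))"

lemma agmon_weight_pos: "agmon_weight eta h x > 0"
  unfolding agmon_weight_def by simp

lemma agmon_weight_has_derivative:
  assumes "x < 0"
  shows "(agmon_weight eta h has_real_derivative
           (- 3/2 * (eta / h) * sqrt (-x)) * agmon_weight eta h x) (at x)"
proof -
  have "((\<lambda>y. (-y) powr (3/2)) has_real_derivative 3/2 * (-x) powr (3/2 - of_nat 1) * (-1)) (at x)"
    using assms by (intro DERIV_fun_powr DERIV_minus DERIV_ident) simp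
  then have "((\<lambda>y. exp (eta / h * (-y) powr (3/2))) has_real_derivative
      exp (eta / h * (-x) powr (3/2)) * (eta / h * (3/2 * (-x) powr (3/2 - of_nat 1) * (-1)))) (at x)"
    by (intro DERIV_fun_exp DERIV_cmult)
  also have "exp (eta / h * (-x) powr (3/2)) * (eta / h * (3/2 * (-x) powr (3/2 - of_nat 1) * (-1)))
      = (- 3/2 * (eta / h) * sqrt (-x)) * agmon_weight eta h x"
    using assms by (simp add: agmon_weight_def powr_half_sqrt field_simps)
  finally show ?thesis
    by (rule has_field_derivative_transform_within_open[where S = "{..<0}"])
       (use assms in \<open>auto simp: agmon_weight_def\<close>)
qed

lemma agmon_weight_le:
  fixes h eta x R :: real
  assumes "h > 0" "eta > 0" "\<bar>x\<bar> \<le> R * h powr (2/3)"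
  shows "agmon_weight eta h x \<le> exp (eta * R powr (3/2))"
proof -
  have "\<bar>x\<bar> powr (3/2) \<le> (R * h powr (2/3)) powr (3/2)"
    using assms(3) by (intro powr_mono2) auto
  also have "\<dots> = R powr (3/2) * h"
    using assms order_trans[OF abs_ge_zero assms(3)]
    by (simp add: powr_mult powr_powr zero_le_mult_iff)
  finally have "eta / h * \<bar>x\<bar> powr (3/2) \<le> eta * R powr (3/2)"
    using assms by (simp add: field_simps)
  then show ?thesis unfolding agmon_weight_def by simp
qed

definition agmon_const :: "real \<Rightarrow> real \<Rightarrow> real \<Rightarrow> real" where
  "agmon_const c G eta = (1 + G) * exp (eta * (2 * (G + 1) / c) powr (3/2))"

lemma agmon_const_pos: "G \<ge> 0 \<Longrightarrow> agmon_const c G eta > 0"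
  unfolding agmon_const_def by (simp add: add_pos_nonneg)

text \<open>Split at \<open>|x| = R h\<^sup>2\<^sup>/\<^sup>3\<close> with \<open>R = 2(G + 1)/c\<close>: beyond it the effective potential
  exceeds \<open>h\<^sup>2\<^sup>/\<^sup>3\<close>, below it the weight is at most \<open>exp (\<eta> R\<^sup>3\<^sup>/\<^sup>2)\<close>.\<close>
lemma agmon_weight_threshold:
  assumes "c > 0" "G \<ge> 0" "eta > 0" "h > 0"
  shows "h powr (2/3) * agmon_weight eta h x
     \<le> (c/2 * \<bar>x\<bar> - G * h powr (2/3)) * agmon_weight eta h x + agmon_const c G eta * h powr (2/3)"
proof -
  define R where "R = 2 * (G + 1) / c"
  define w where "w = agmon_weight eta h x"
  have w: "w > 0" unfolding w_def by (rule agmon_weight_pos)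
  have hp: "h powr (2/3) > 0" using assms by simp
  show ?thesis
  proof (cases "\<bar>x\<bar> \<le> R * h powr (2/3)")
    case True
    then have "(1 + G) * h powr (2/3) * w \<le> agmon_const c G eta * h powr (2/3)"
      using agmon_weight_le[OF assms(4,3) True] hp assms(2)
      unfolding agmon_const_def R_def w_def by (simp add: mult.commute mult.left_commute)
    moreover have "(- G * h powr (2/3)) * w \<le> (c/2 * \<bar>x\<bar> - G * h powr (2/3)) * w"
      using w assms(1) by (intro mult_right_mono) auto
    ultimately show ?thesis unfolding w_def[symmetric] by (simp add: algebra_simps)
  next
    case False
    then have "c/2 * \<bar>x\<bar> \<ge> c/2 * (R * h powr (2/3))"
      using assms(1) by (intro mult_left_mono) auto
    moreover have "c/2 * (R * h powr (2/3)) = (G + 1) * h powr (2/3)"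
      unfolding R_def using assms(1) by simp
    ultimately have "c/2 * \<bar>x\<bar> - G * h powr (2/3) \<ge> h powr (2/3)"
      by (simp add: algebra_simps)
    then have "h powr (2/3) * w \<le> (c/2 * \<bar>x\<bar> - G * h powr (2/3)) * w"
      using w by (intro mult_right_mono) auto
    moreover have "agmon_const c G eta * h powr (2/3) \<ge> 0"
      using mult_pos_pos[OF agmon_const_pos[OF assms(2)] hp] by (rule less_imp_le)
    ultimately show ?thesis unfolding w_def by simp
  qed
qed

lemma Re_mult_cnj_ge:
  fixes a b :: complex and phi :: real
  shows "0 \<le> (cmod a)^2 + phi^2 * (cmod b)^2 + 2 * phi * Re (a * cnj b)"
proof -
  have "(cmod (a + of_real phi * b))^2 = (cmod a)^2 + phi^2 * (cmod b)^2 + 2 * phi * Re (a * cnj b)"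
    unfolding cmod_power2 by (simp add: algebra_simps power2_eq_square)
  then show ?thesis by (metis zero_le_power2)
qed

lemma integral_le_by_flux:
  fixes P U D F :: "real \<Rightarrow> real"
  assumes "a \<le> b" and F: "\<And>x. x \<in> {a..b} \<Longrightarrow> (F has_real_derivative D x) (at x)"
    and "F b \<le> F a" and P: "P integrable_on {a..b}" and U: "U integrable_on {a..b}"
    and "c > 0" and pointwise: "\<And>x. x \<in> {a..b} \<Longrightarrow> c * P x \<le> D x + K * U x"
  shows "integral {a..b} P \<le> K / c * integral {a..b} U"
proof -
  have D: "(D has_integral F b - F a) {a..b}"
    using assms(1) F
    by (intro fundamental_theorem_of_calculus)
       (auto simp: has_real_derivative_iff_has_vector_derivative has_vector_derivative_at_within)
  then have DU: "((\<lambda>x. D x + K * U x) has_integral (F b - F a + K * integral {a..b} U)) {a..b}"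
    using U by (intro has_integral_add has_integral_mult_right integrable_integral)
  have "((\<lambda>x. c * P x) has_integral c * integral {a..b} P) {a..b}"
    using P by (intro has_integral_mult_right integrable_integral)
  then have "c * integral {a..b} P \<le> F b - F a + K * integral {a..b} U"
    by (rule has_integral_le[OF _ DU]) (use pointwise in auto)
  also have "\<dots> \<le> K * integral {a..b} U"
    using assms(3) by simp
  finally show ?thesis
    using \<open>c > 0\<close> by (simp add: field_simps)
qed

lemma set_nn_integral_eq_integral:
  fixes f :: "real \<Rightarrow> real"
  assumes "continuous_on {a..b} f" "\<And>x. x \<in> {a..b} \<Longrightarrow> 0 \<le> f x"
  shows "(\<integral>\<^sup>+ x \<in> {a..b}. ennreal (f x) \<partial>lborel) = ennreal (integral {a..b} f)"
proof -
  have "(f has_integral integral {a..b} f) {a..b}"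
    using integrable_continuous_interval[OF assms(1)] by (rule integrable_integral)
  from nn_integral_has_integral_lebesgue'[OF assms(2) this] show ?thesis by simp
qed

lemma set_nn_integral_open_interval_le:
  fixes f :: "real \<Rightarrow> ennreal"
  assumes f: "(\<lambda>x. f x * indicator {a<..<b} x) \<in> borel_measurable borel"
    and bound: "\<And>s t. a < s \<Longrightarrow> t < b \<Longrightarrow> (\<integral>\<^sup>+ x \<in> {s..t}. f x \<partial>lborel) \<le> M"
  shows "(\<integral>\<^sup>+ x \<in> {a<..<b}. f x \<partial>lborel) \<le> M"
proof -
  define g where "g x = f x * indicator {a<..<b} x" for x
  define \<mu> where "\<mu> = density lborel g"
  define S where "S n = {a + 1 / Suc n .. b - 1 / Suc n}" for n :: nat
  have g: "g \<in> borel_measurable lborel" using f unfolding g_def by simp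
  have S_sub: "S n \<subseteq> {a<..<b}" for n
  proof
    fix x assume "x \<in> S n"
    moreover have "0 < 1 / real (Suc n)" by simp
    ultimately show "x \<in> {a<..<b}"
      unfolding S_def by (simp only: atLeastAtMost_iff greaterThanLessThan_iff) linarith
  qed
  have restrict: "(\<integral>\<^sup>+ x \<in> A. f x \<partial>lborel) = emeasure \<mu> A" if "A \<subseteq> {a<..<b}" "A \<in> sets borel" for A
  proof -
    have "f x * indicator A x = g x * indicator A x" for x
      using that(1) by (auto simp: g_def split: split_indicator)
    then show ?thesis unfolding \<mu>_def using g that(2) by (simp add: emeasure_density)
  qed
  have "incseq S"
    unfolding S_def by (intro monoI) (auto simp: frac_le intro!: order_trans[OF _ add_left_mono])
  moreover have "(\<Union>n. S n) = {a<..<b}"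
  proof
    show "(\<Union>n. S n) \<subseteq> {a<..<b}" using S_sub by blast
    show "{a<..<b} \<subseteq> (\<Union>n. S n)"
    proof
      fix x assume "x \<in> {a<..<b}"
      then have "0 < min (x - a) (b - x)" by simp
      then obtain n where "1 / real (Suc n) < min (x - a) (b - x)"
        by (rule nat_approx_posE)
      then have "x \<in> S n" unfolding S_def by simp
      then show "x \<in> (\<Union>n. S n)" by blast
    qed
  qed
  ultimately have "emeasure \<mu> {a<..<b} = (SUP n. emeasure \<mu> (S n))"
    unfolding \<mu>_def by (subst SUP_emeasure_incseq) (auto simp: S_def)
  also have "\<dots> \<le> M"
  proof (rule SUP_least)
    fix n
    show "emeasure \<mu> (S n) \<le> M"
    proof (cases "S n = {}")
      case True
      then show ?thesis by simp
    next
      case False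
      then show ?thesis
        using bound[of "a + 1 / Suc n" "b - 1 / Suc n"] restrict[OF S_sub] by (simp add: S_def)
    qed
  qed
  finally show ?thesis using restrict by simp
qed

lemma tri_eigenpair_has_derivatives:
  assumes "tri_eigenpair h lam psi" "tri_a < x" "x < 0"
  shows "(psi has_vector_derivative dx psi x) (at x)"
    and "(dx psi has_vector_derivative dx (dx psi) x) (at x)"
    and "of_real (h^2) * dx (dx psi) x = of_real (tri_V x - lam) * psi x"
proof -
  have "psi differentiable (at x)" "dx psi differentiable (at x)"
    and eq: "- of_real (h^2) * dx (dx psi) x + of_real (tri_V x) * psi x = of_real lam * psi x"
    using assms unfolding tri_eigenpair_def by auto
  then show "(psi has_vector_derivative dx psi x) (at x)"
    and "(dx psi has_vector_derivative dx (dx psi) x) (at x)"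
    unfolding dx_def by (simp_all add: vector_derivative_works)
  show "of_real (h^2) * dx (dx psi) x = of_real (tri_V x - lam) * psi x"
    using eq by (simp add: algebra_simps)
qed

definition agmon_density :: "real \<Rightarrow> real \<Rightarrow> (real \<Rightarrow> complex) \<Rightarrow> real \<Rightarrow> real" where
  "agmon_density eta h psi x = agmon_weight eta h x *
     ((cmod (psi x))^2 + (cmod (of_real (h powr (2/3)) * dx psi x))^2)"

lemma agmon_density_nonneg: "agmon_density eta h psi x \<ge> 0"
  unfolding agmon_density_def using agmon_weight_pos[of eta h x] by simp

lemma tri_eigenpair_continuous:
  assumes "tri_eigenpair h lam psi"
  shows "continuous_on {tri_a<..<0} (\<lambda>x. (cmod (psi x))^2)"
    and "continuous_on {tri_a<..<0} (agmon_density eta h psi)"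
proof -
  have "isCont psi x" "isCont (dx psi) x" "isCont (agmon_weight eta h) x"
    if "x \<in> {tri_a<..<0}" for x
    using that
    by (auto intro!: has_vector_derivative_continuous tri_eigenpair_has_derivatives(1,2)[OF assms]
        DERIV_isCont agmon_weight_has_derivative)
  then show "continuous_on {tri_a<..<0} (\<lambda>x. (cmod (psi x))^2)"
    and "continuous_on {tri_a<..<0} (agmon_density eta h psi)"
    unfolding agmon_density_def by (auto intro!: continuous_at_imp_continuous_on continuous_intros)
qed

lemma tri_eigenpair_flux_has_derivative:
  assumes ep: "tri_eigenpair h lam psi" and x: "tri_a < x" "x < 0"
    and w: "(w has_real_derivative w') (at x)"
  shows "((\<lambda>y. h^2 * w y * Re (dx psi y * cnj (psi y))) has_real_derivative
           w x * ((tri_V x - lam) * (cmod (psi x))^2 + h^2 * (cmod (dx psi x))^2)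
           + h^2 * w' * Re (dx psi x * cnj (psi x))) (at x)"
proof -
  note d = tri_eigenpair_has_derivatives[OF ep x]
  define r where "r y = Re (dx psi y * cnj (psi y))" for y
  define r' where "r' = Re (dx (dx psi) x * cnj (psi x) + dx psi x * cnj (dx psi x))"
  have "h^2 * Re (dx (dx psi) x * cnj (psi x)) = Re (of_real (h^2) * dx (dx psi) x * cnj (psi x))"
    by (simp add: algebra_simps)
  also have "\<dots> = (tri_V x - lam) * (cmod (psi x))^2"
    unfolding d(3) mult.assoc by (simp add: complex_mult_cnj cmod_power2)
  finally have r': "h^2 * r' = (tri_V x - lam) * (cmod (psi x))^2 + h^2 * (cmod (dx psi x))^2"
    unfolding r'_def by (simp add: complex_mult_cnj cmod_power2 algebra_simps)
  have "((\<lambda>y. h^2 * w y * r y) has_real_derivative h^2 * (w x * r' + w' * r x)) (at x)"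
    unfolding mult.assoc r_def r'_def
    by (intro DERIV_cmult DERIV_mult' w has_real_derivative_Re_mult_cnj d(1,2))
  moreover have "h^2 * (w x * r' + w' * r x) = w x * (h^2 * r') + h^2 * w' * r x"
    by (simp add: algebra_simps)
  ultimately show ?thesis
    unfolding r' r_def by simp
qed

lemma agmon_pointwise_bound:
  fixes psi :: "real \<Rightarrow> complex"
  assumes h: "h > 0" and G: "G \<ge> 0" and lam: "\<bar>lam - 1/8\<bar> \<le> G * h powr (2/3)"
    and eta: "eta > 0" "eta^2 \<le> tri_slope / 3"
    and x: "tri_a < x" "x < 0"
  shows "h powr (2/3) / 2 * agmon_density eta h psi x
     \<le> agmon_weight eta h x * ((tri_V x - lam) * (cmod (psi x))^2 + h^2 * (cmod (dx psi x))^2)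
       + h^2 * (- 3/2 * (eta / h) * sqrt (-x) * agmon_weight eta h x) * Re (dx psi x * cnj (psi x))
       + agmon_const tri_slope G eta * h powr (2/3) * (cmod (psi x))^2"
proof -
  define hp where "hp = h powr (2/3)"
  define w where "w = agmon_weight eta h x"
  define phi where "phi = - 3/2 * (eta / h) * sqrt (-x)"
  define U where "U = (cmod (psi x))^2"
  define W where "W = (cmod (dx psi x))^2"
  define r where "r = Re (dx psi x * cnj (psi x))"
  define B where "B = agmon_const tri_slope G eta"
  have w: "w > 0" unfolding w_def by (rule agmon_weight_pos)
  have U: "U \<ge> 0" unfolding U_def by simp
  have "hp^3 = h powr (2/3 + 2/3 + 2/3)"
    unfolding hp_def by (simp only: power3_eq_cube powr_add)
  also have "\<dots> = h^2" using h by simp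
  finally have hp3: "hp^3 = h^2" .
  have "h^2 * phi^2 / 2 = 9/8 * eta^2 * \<bar>x\<bar>"
    unfolding phi_def using h x by (simp add: power_mult_distrib power_divide)
  then have effective: "tri_slope / 2 * \<bar>x\<bar> - G * hp \<le> tri_V x - lam - h^2 * phi^2 / 2"
    using tri_effective_potential_ge[OF x lam[folded hp_def] eta(2)] by simp
  have cross: "0 \<le> h^2 / 2 * W + h^2 * phi^2 / 2 * U + h^2 * phi * r"
    using mult_left_mono[OF Re_mult_cnj_ge[of "dx psi x" phi "psi x"], of "h^2 / 2"]
    unfolding U_def W_def r_def by (simp add: algebra_simps)
  have "hp / 2 * agmon_density eta h psi x = hp / 2 * w * U + hp^3 / 2 * w * W"
    unfolding agmon_density_def w_def[symmetric] U_def W_def hp_def[symmetric]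
    by (simp add: norm_mult power_mult_distrib algebra_simps power3_eq_cube power2_eq_square)
  also have "\<dots> \<le> hp * w * U + h^2 / 2 * w * W"
    unfolding hp3 using w U h unfolding hp_def by (simp add: mult_right_mono)
  also have "\<dots> \<le> ((tri_slope / 2 * \<bar>x\<bar> - G * hp) * w + B * hp) * U + h^2 / 2 * w * W"
    using agmon_weight_threshold[OF tri_slope_pos G eta(1) h, of x] U
    unfolding hp_def w_def B_def by (simp add: mult_right_mono)
  also have "\<dots> \<le> (tri_V x - lam - h^2 * phi^2 / 2) * w * U + B * hp * U + h^2 / 2 * w * W"
    using mult_right_mono[OF effective, of "w * U"] w U by (simp add: algebra_simps)
  also have "\<dots> \<le> w * ((tri_V x - lam) * U + h^2 * W) + h^2 * (phi * w) * r + B * hp * U"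
    using mult_right_mono[OF cross, of w] w by (simp add: algebra_simps)
  finally show ?thesis
    unfolding hp_def w_def phi_def U_def W_def r_def B_def .
qed

lemma tri_eigenpair_agmon_integral:
  assumes ep: "tri_eigenpair h lam psi" and h: "h > 0" and G: "G \<ge> 0"
    and lam: "\<bar>lam - 1/8\<bar> \<le> G * h powr (2/3)"
    and eta: "eta > 0" "eta^2 \<le> tri_slope / 3"
    and ab: "tri_a < a" "a \<le> b" "b < 0"
    and flux_a: "0 \<le> Re (dx psi a * cnj (psi a))" and flux_b: "Re (dx psi b * cnj (psi b)) \<le> 0"
  shows "integral {a..b} (agmon_density eta h psi)
     \<le> 2 * agmon_const tri_slope G eta * integral {a..b} (\<lambda>x. (cmod (psi x))^2)"
proof -
  define w where "w = agmon_weight eta h"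
  define F where "F y = h^2 * w y * Re (dx psi y * cnj (psi y))" for y
  define D where "D x = w x * ((tri_V x - lam) * (cmod (psi x))^2 + h^2 * (cmod (dx psi x))^2)
    + h^2 * (- 3/2 * (eta / h) * sqrt (-x) * w x) * Re (dx psi x * cnj (psi x))" for x
  define K where "K = agmon_const tri_slope G eta * h powr (2/3)"
  have sub: "{a..b} \<subseteq> {tri_a<..<0}" using ab by auto
  have deriv: "(F has_real_derivative D x) (at x)" if "x \<in> {a..b}" for x
    unfolding F_def D_def w_def
    using that ab by (intro tri_eigenpair_flux_has_derivative[OF ep] agmon_weight_has_derivative) auto
  have "0 \<le> F a"
    unfolding F_def w_def using flux_a agmon_weight_pos[of eta h a]
    by (intro mult_nonneg_nonneg) auto
  moreover have "F b \<le> 0"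
    unfolding F_def w_def using flux_b agmon_weight_pos[of eta h b]
    by (intro mult_nonneg_nonpos mult_nonneg_nonneg) auto
  moreover have "agmon_density eta h psi integrable_on {a..b}"
    and "(\<lambda>x. (cmod (psi x))^2) integrable_on {a..b}"
    using continuous_on_subset[OF tri_eigenpair_continuous(2)[OF ep] sub]
      continuous_on_subset[OF tri_eigenpair_continuous(1)[OF ep] sub]
    by (auto intro: integrable_continuous_interval)
  moreover have "h powr (2/3) / 2 * agmon_density eta h psi x \<le> D x + K * (cmod (psi x))^2"
    if "x \<in> {a..b}" for x
    using agmon_pointwise_bound[OF h G lam eta, of x psi] that ab unfolding D_def K_def w_def by simp
  ultimately have "integral {a..b} (agmon_density eta h psi)
      \<le> K / (h powr (2/3) / 2) * integral {a..b} (\<lambda>x. (cmod (psi x))^2)"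
    using h ab(2) deriv by (intro integral_le_by_flux[where F = F and D = D]) auto
  also have "K / (h powr (2/3) / 2) = 2 * agmon_const tri_slope G eta"
    unfolding K_def using h by simp
  finally show ?thesis .
qed

text \<open>The Dirichlet conditions force \<open>|\<psi>|\<^sup>2\<close> to increase somewhere left of \<open>s\<close> and to decrease
  somewhere right of \<open>t\<close>; at such points the boundary terms of the flux have a good sign.\<close>
lemma tri_eigenpair_flux_sign_points:
  assumes ep: "tri_eigenpair h lam psi" and st: "tri_a < s" "s \<le> t" "t < 0"
  obtains a b where "tri_a < a" "a < s" "0 \<le> Re (dx psi a * cnj (psi a))"
    and "t < b" "b < 0" "Re (dx psi b * cnj (psi b)) \<le> 0"
proof -
  have cont: "continuous_on {tri_a..0} psi" and psi0: "psi tri_a = 0" "psi 0 = 0"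
    using ep unfolding tri_eigenpair_def by auto
  have deriv: "(psi has_vector_derivative dx psi x) (at x)" if "tri_a < x" "x < 0" for x
    using tri_eigenpair_has_derivatives(1)[OF ep that] .
  have "continuous_on {tri_a..s} psi" "continuous_on {t..0} psi"
    using st by (auto intro!: continuous_on_subset[OF cont])
  moreover have "(psi has_vector_derivative dx psi x) (at x)"
    if "tri_a < x \<and> x < s \<or> t < x \<and> x < 0" for x
    using that st by (intro deriv) auto
  ultimately obtain a b where a: "tri_a < a" "a < s"
      "(cmod (psi s))^2 - (cmod (psi tri_a))^2 = (s - tri_a) * (2 * Re (dx psi a * cnj (psi a)))"
    and b: "t < b" "b < 0"
      "(cmod (psi 0))^2 - (cmod (psi t))^2 = (0 - t) * (2 * Re (dx psi b * cnj (psi b)))"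
    using norm_sq_mean_value[OF st(1), of psi] norm_sq_mean_value[OF st(3), of psi] by metis
  have "0 \<le> (s - tri_a) * (2 * Re (dx psi a * cnj (psi a)))"
    unfolding a(3)[symmetric] psi0 by simp
  then have "0 \<le> Re (dx psi a * cnj (psi a))"
    using st by (simp add: zero_le_mult_iff)
  moreover have "(0 - t) * (2 * Re (dx psi b * cnj (psi b))) \<le> 0"
    unfolding b(3)[symmetric] psi0 by simp
  then have "Re (dx psi b * cnj (psi b)) \<le> 0"
    using st by (auto simp: zero_le_mult_iff)
  ultimately show ?thesis using that a b by blast
qed

lemma tri_eigenpair_agmon_closed_interval:
  assumes ep: "tri_eigenpair h lam psi" and h: "h > 0" and G: "G \<ge> 0"
    and lam: "\<bar>lam - 1/8\<bar> \<le> G * h powr (2/3)"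
    and eta: "eta > 0" "eta^2 \<le> tri_slope / 3"
    and st: "tri_a < s" "t < 0"
  shows "(\<integral>\<^sup>+ x \<in> {s..t}. ennreal (agmon_density eta h psi x) \<partial>lborel)
     \<le> ennreal (2 * agmon_const tri_slope G eta) * (\<integral>\<^sup>+ x \<in> {tri_a<..<0}. ennreal ((cmod (psi x))^2) \<partial>lborel)"
proof (cases "s \<le> t")
  case False
  then show ?thesis by simp
next
  case True
  obtain a b where a: "tri_a < a" "a < s" "0 \<le> Re (dx psi a * cnj (psi a))"
    and b: "t < b" "b < 0" "Re (dx psi b * cnj (psi b)) \<le> 0"
    using tri_eigenpair_flux_sign_points[OF ep st(1) True st(2)] .
  have ab: "a \<le> b" using a b True by linarith
  have sub: "{a..b} \<subseteq> {tri_a<..<0}" using a b by auto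
  note cont = continuous_on_subset[OF tri_eigenpair_continuous(1)[OF ep] sub]
    continuous_on_subset[OF tri_eigenpair_continuous(2)[OF ep] sub]
  have U_int: "integral {a..b} (\<lambda>x. (cmod (psi x))^2) \<ge> 0"
    by (rule integral_nonneg[OF integrable_continuous_interval[OF cont(1)]]) simp
  have "(\<integral>\<^sup>+ x \<in> {s..t}. ennreal (agmon_density eta h psi x) \<partial>lborel)
      \<le> (\<integral>\<^sup>+ x \<in> {a..b}. ennreal (agmon_density eta h psi x) \<partial>lborel)"
    using a b by (intro nn_integral_mono) (auto split: split_indicator)
  also have "\<dots> = ennreal (integral {a..b} (agmon_density eta h psi))"
    using cont(2) agmon_density_nonneg by (rule set_nn_integral_eq_integral)
  also have "\<dots> \<le> ennreal (2 * agmon_const tri_slope G eta * integral {a..b} (\<lambda>x. (cmod (psi x))^2))"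
    using tri_eigenpair_agmon_integral[OF ep h G lam eta a(1) ab b(2) a(3) b(3)]
    by (rule ennreal_leI)
  also have "\<dots> = ennreal (2 * agmon_const tri_slope G eta)
      * (\<integral>\<^sup>+ x \<in> {a..b}. ennreal ((cmod (psi x))^2) \<partial>lborel)"
    unfolding set_nn_integral_eq_integral[OF cont(1) zero_le_power2]
    using agmon_const_pos[OF G, of tri_slope eta] U_int by (intro ennreal_mult) auto
  also have "\<dots> \<le> ennreal (2 * agmon_const tri_slope G eta)
      * (\<integral>\<^sup>+ x \<in> {tri_a<..<0}. ennreal ((cmod (psi x))^2) \<partial>lborel)"
    using sub by (intro mult_left_mono nn_integral_mono) (auto split: split_indicator)
  finally show ?thesis .
qed

lemma tri_eigenpair_agmon_estimate:
  assumes "tri_eigenpair h lam psi" "h > 0" "G \<ge> 0"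
    and "\<bar>lam - 1/8\<bar> \<le> G * h powr (2/3)"
    and "eta > 0" "eta^2 \<le> tri_slope / 3"
  shows "(\<integral>\<^sup>+ x \<in> {tri_a<..<0}. ennreal (agmon_density eta h psi x) \<partial>lborel)
     \<le> ennreal (2 * agmon_const tri_slope G eta) * (\<integral>\<^sup>+ x \<in> {tri_a<..<0}. ennreal ((cmod (psi x))^2) \<partial>lborel)"
proof (rule set_nn_integral_open_interval_le[OF _ tri_eigenpair_agmon_closed_interval[OF assms]])
  have "(\<lambda>x. indicator {tri_a<..<0} x *\<^sub>R agmon_density eta h psi x) \<in> borel_measurable borel"
    using tri_eigenpair_continuous(2)[OF assms(1)]
    by (rule borel_measurable_continuous_on_indicator[rotated]) simp
  then have "(\<lambda>x. ennreal (indicator {tri_a<..<0} x *\<^sub>R agmon_density eta h psi x)) \<in> borel_measurable borel"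
    by measurable
  then show "(\<lambda>x. ennreal (agmon_density eta h psi x) * indicator {tri_a<..<0} x) \<in> borel_measurable borel"
    by (rule measurable_cong[THEN iffD1, rotated]) (auto split: split_indicator)
qed

theorem proposition4p3:
  fixes \<Gamma>0 :: real
  assumes "\<Gamma>0 > 0"
  shows "\<exists>h0>0. \<exists>C0>0. \<exists>\<eta>0>0. \<forall>h lam psi.
     0 < h \<and> h < h0 \<and> tri_eigenpair h lam psi \<and> \<bar>lam - 1/8\<bar> \<le> \<Gamma>0 * h powr (2/3) \<longrightarrow>
     (\<integral>\<^sup>+ x \<in> {tri_a<..<0}. ennreal (exp (\<eta>0 / h * \<bar>x\<bar> powr (3/2)) *
         ((cmod (psi x))^2 + (cmod (complex_of_real (h powr (2/3)) * dx psi x))^2)) \<partial>lborel)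
     \<le> ennreal C0 * (\<integral>\<^sup>+ x \<in> {tri_a<..<0}. ennreal ((cmod (psi x))^2) \<partial>lborel)"
proof -
  define eta where "eta = sqrt (tri_slope / 3)"
  have eta: "eta > 0" "eta^2 \<le> tri_slope / 3"
    unfolding eta_def using tri_slope_pos by simp_all
  have C0: "2 * agmon_const tri_slope \<Gamma>0 eta > 0"
    using agmon_const_pos assms by simp
  have "(\<integral>\<^sup>+ x \<in> {tri_a<..<0}. ennreal (exp (eta / h * \<bar>x\<bar> powr (3/2)) *
         ((cmod (psi x))^2 + (cmod (complex_of_real (h powr (2/3)) * dx psi x))^2)) \<partial>lborel)
     \<le> ennreal (2 * agmon_const tri_slope \<Gamma>0 eta)
       * (\<integral>\<^sup>+ x \<in> {tri_a<..<0}. ennreal ((cmod (psi x))^2) \<partial>lborel)"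
    if "0 < h" "tri_eigenpair h lam psi" "\<bar>lam - 1/8\<bar> \<le> \<Gamma>0 * h powr (2/3)" for h lam psi
    using tri_eigenpair_agmon_estimate[OF that(2,1) less_imp_le[OF assms] that(3) eta]
    unfolding agmon_density_def agmon_weight_def .
  \<comment> \<open>The bound holds for every \<open>h > 0\<close>, so \<open>h0 = 1\<close> is an arbitrary choice.\<close>
  then show ?thesis
    using C0 eta(1) zero_less_one by blast
qed

end
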